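(* Let $\Omega\subset\mathbb{R}^d$ be a connected, bounded open domain, let $\mu$ be a bounded measurable weight on $\Omega$ with $\mu>0$ almost everywhere, let $\mathbf{r}\in\Upsilon$, and assume the hyperplanes $\mathcal{P}_1(\mathbf{r}_1),\ldots,\mathcal{P}_n(\mathbf{r}_n)$ are pairwise distinct. Then the layer Gauss–Newton matrix $\mathcal{H}(\mathbf{r})$ is symmetric positive definite. Consequently, for $\mathbf{c}=(c_1,\ldots,c_n)^T\in\mathbb{R}^n$, the Gauss–Newton matrix $\mathcal{G}(\mathbf{c},\mathbf{r})=(D(\mathbf{c})\otimes I_{d+1})\mathcal{H}(\mathbf{r})(D(\mathbf{c})\otimes I_{d+1})$ is positive definite if and only if $c_i\neq0$ for all $i=1,\ldots,n$.
   Context: $\mathcal{S}^{d-1}$ is the unit sphere in $\mathbb{R}^d$; $\mathbf{y}=(1,x_1,\ldots,x_d)^T$. For $\mathbf{r}_i=(b_i,\boldsymbol{\omega}_i)\in\mathbb{R}^{d+1}$, $\mathcal{P}_i(\mathbf{r}_i)=\{\mathbf{x}\in\Omega:\boldsymbol{\omega}_i\cdot\mathbf{x}+b_i=0\}$; $\Upsilon=\{\mathbf{r}=(\mathbf{r}_1,\ldots,\mathbf{r}_n): \mathbf{r}_i=(b_i,\boldsymbol{\omega}_i),\ b_i\in\mathbb{R},\ \boldsymbol{\omega}_i\in\mathcal{S}^{d-1},\ \mathcal{P}_i(\mathbf{r}_i)\cap\Omega\neq\emptyset\}$. $H$ is the Heaviside function, $\mathbf{H}(\mathbf{x})=(H(\mathbf{r}_1\cdot\mathbf{y}),\ldots,H(\mathbf{r}_n\cdot\mathbf{y}))^T$.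 The layer Gauss–Newton matrix is the $n(d+1)\times n(d+1)$ matrix $\mathcal{H}(\mathbf{r})=\int_\Omega\mu(\mathbf{x})[\mathbf{H}(\mathbf{x})\mathbf{H}(\mathbf{x})^T]\otimes[\mathbf{y}\mathbf{y}^T]\,d\mathbf{x}$, where $\otimes$ is the Kronecker product. $D(\mathbf{c})=\mathrm{diag}(c_1,\ldots,c_n)$ and $I_{d+1}$ is the identity matrix of order $d+1$. *)

theory Defs
  imports "HOL-Analysis.Analysis"
begin

text \<open>A neuron parameter r_i = (b_i, omega_i) is a pair in real x real^'d.
  Matrices of order n(d+1) are indexed by pairs (i, a) with i < n and
  a :: 'd option, where None stands for the constant coordinate 1 of
  y = (1, x_1, ..., x_d) and Some j for the coordinate x_j.\<close>

definition heaviside :: "real \<Rightarrow> real" where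
  "heaviside t = (if t > 0 then 1 else 0)"

definition aug :: "real^'d \<Rightarrow> 'd option \<Rightarrow> real" where
  "aug x a = (case a of None \<Rightarrow> 1 | Some j \<Rightarrow> x $ j)"

text \<open>r . y  with r = (b, omega) and y = (1, x)\<close>
definition act :: "real \<times> (real^'d) \<Rightarrow> real^'d \<Rightarrow> real" where
  "act r x = fst r + snd r \<bullet> x"

definition hyperplane :: "(real^'d) set \<Rightarrow> real \<times> (real^'d) \<Rightarrow> (real^'d) set" where
  "hyperplane \<Omega> r = {x \<in> \<Omega>. snd r \<bullet> x + fst r = 0}"

definition Upsilon :: "(real^'d) set \<Rightarrow> nat \<Rightarrow> (nat \<Rightarrow> real \<times> (real^'d)) set" where
  "Upsilon \<Omega> n = {r. \<forall>i<n. norm (snd (r i)) = 1 \<and> hyperplane \<Omega> (r i) \<noteq> {}}"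

definition idx :: "nat \<Rightarrow> (nat \<times> 'd option) set" where
  "idx n = {..<n} \<times> UNIV"

definition kron :: "(nat \<Rightarrow> nat \<Rightarrow> real) \<Rightarrow> ('d option \<Rightarrow> 'd option \<Rightarrow> real)
    \<Rightarrow> nat \<times> 'd option \<Rightarrow> nat \<times> 'd option \<Rightarrow> real" where
  "kron A B k l = A (fst k) (fst l) * B (snd k) (snd l)"

definition mat_mult :: "(nat \<times> 'd option) set \<Rightarrow> (nat \<times> 'd option \<Rightarrow> nat \<times> 'd option \<Rightarrow> real)
    \<Rightarrow> (nat \<times> 'd option \<Rightarrow> nat \<times> 'd option \<Rightarrow> real)
    \<Rightarrow> nat \<times> 'd option \<Rightarrow> nat \<times> 'd option \<Rightarrow> real" where
  "mat_mult I A B k l = (\<Sum>m\<in>I. A k m * B m l)"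

definition diag_mat :: "(nat \<Rightarrow> real) \<Rightarrow> nat \<Rightarrow> nat \<Rightarrow> real" where
  "diag_mat c i j = (if i = j then c i else 0)"

definition id_mat :: "'d option \<Rightarrow> 'd option \<Rightarrow> real" where
  "id_mat a b = (if a = b then 1 else 0)"

definition layer_GN :: "(real^'d) set \<Rightarrow> (real^'d \<Rightarrow> real) \<Rightarrow> nat \<Rightarrow> (nat \<Rightarrow> real \<times> (real^'d))
    \<Rightarrow> nat \<times> 'd option \<Rightarrow> nat \<times> 'd option \<Rightarrow> real" where
  "layer_GN \<Omega> \<mu> n r k l =
     (LINT x:\<Omega>|lebesgue. \<mu> x *
        kron (\<lambda>i j. heaviside (act (r i) x) * heaviside (act (r j) x))
             (\<lambda>a b. aug x a * aug x b) k l)"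

definition GN :: "(real^'d) set \<Rightarrow> (real^'d \<Rightarrow> real) \<Rightarrow> nat \<Rightarrow> (nat \<Rightarrow> real)
    \<Rightarrow> (nat \<Rightarrow> real \<times> (real^'d)) \<Rightarrow> nat \<times> 'd option \<Rightarrow> nat \<times> 'd option \<Rightarrow> real" where
  "GN \<Omega> \<mu> n c r =
     mat_mult (idx n) (mat_mult (idx n) (kron (diag_mat c) id_mat) (layer_GN \<Omega> \<mu> n r))
              (kron (diag_mat c) id_mat)"

definition symmetric_on :: "'i set \<Rightarrow> ('i \<Rightarrow> 'i \<Rightarrow> real) \<Rightarrow> bool" where
  "symmetric_on I M \<longleftrightarrow> (\<forall>k\<in>I. \<forall>l\<in>I. M k l = M l k)"

definition pos_def_on :: "'i set \<Rightarrow> ('i \<Rightarrow> 'i \<Rightarrow> real) \<Rightarrow> bool" where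
  "pos_def_on I M \<longleftrightarrow>
     (\<forall>v. (\<exists>k\<in>I. v k \<noteq> 0) \<longrightarrow> (\<Sum>k\<in>I. \<Sum>l\<in>I. v k * M k l * v l) > 0)"

end

theory Submission
  imports Defs
begin

text \<open>The layer Gauss--Newton matrix is the Gram matrix, for the weight \<open>\<mu>\<close>, of the
  features \<open>\<psi>\<^sub>i\<^sub>a(x) = H(r\<^sub>i \<cdot> y) y\<^sub>a\<close>: its quadratic form is
  \<open>\<integral>\<^sub>\<Omega> \<mu> (\<Sum> v\<^sub>i\<^sub>a \<psi>\<^sub>i\<^sub>a)\<^sup>2\<close>, so, as \<open>\<mu> > 0\<close> a.e., positive definiteness amounts
  to linear independence of the features modulo null sets. Suppose
  \<open>\<Sum>\<^sub>i H(r\<^sub>i \<cdot> y) (w\<^sub>i \<cdot> y)\<close> vanishes a.e. on \<open>\<Omega>\<close>. Distinct hyperplanes cannot agree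
  near a common point, so the \<open>i\<close>-th hyperplane contains a point of \<open>\<Omega>\<close> off all the
  others; near it the sum is an affine function plus \<open>H(r\<^sub>i \<cdot> y) (w\<^sub>i \<cdot> y)\<close>, and comparing
  the two sides of the hyperplane gives \<open>w\<^sub>i = 0\<close>. The quadratic form of the Gauss--Newton
  matrix at \<open>v\<close> is that of the layer matrix at \<open>(D(c) \<otimes> I) v\<close>, which can vanish for
  \<open>v \<noteq> 0\<close> exactly when some \<open>c\<^sub>i = 0\<close>.\<close>

lemma set_integrable_bounded_mult:
  fixes \<mu> g :: "'a \<Rightarrow> real"
  assumes "\<Omega> \<in> sets M" "emeasure M \<Omega> < \<infinity>"
    and "set_borel_measurable M \<Omega> \<mu>" "\<forall>x\<in>\<Omega>. \<bar>\<mu> x\<bar> \<le> B"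
    and "g \<in> borel_measurable M" "\<forall>x\<in>\<Omega>. \<bar>g x\<bar> \<le> K"
  shows "set_integrable M \<Omega> (\<lambda>x. \<mu> x * g x)"
proof (rule set_integrable_bound[where f = "\<lambda>_. B * K"])
  show "set_integrable M \<Omega> (\<lambda>_. B * K)"
    using assms(1,2) unfolding set_integrable_def by (simp add: integrable_mult_left)
  have "(\<lambda>x. (indicator \<Omega> x * \<mu> x) * g x) \<in> borel_measurable M"
    using borel_measurable_times[OF assms(3)[unfolded set_borel_measurable_def] assms(5)] by simp
  then show "set_borel_measurable M \<Omega> (\<lambda>x. \<mu> x * g x)"
    unfolding set_borel_measurable_def by (simp add: mult.assoc)
  show "AE x in M. x \<in> \<Omega> \<longrightarrow> norm (\<mu> x * g x) \<le> norm (B * K)"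
  proof (rule AE_I2, rule impI)
    fix x assume "x \<in> \<Omega>"
    with assms(4,6) have "\<bar>\<mu> x\<bar> * \<bar>g x\<bar> \<le> B * K" "0 \<le> B" "0 \<le> K"
      by (auto intro!: mult_mono dest: order_trans[OF abs_ge_zero])
    then show "norm (\<mu> x * g x) \<le> norm (B * K)" by (simp add: abs_mult)
  qed
qed

lemma gram_quadratic_form:
  fixes f :: "'i \<Rightarrow> 'a \<Rightarrow> real"
  assumes "finite I"
    and "\<And>k l. k \<in> I \<Longrightarrow> l \<in> I \<Longrightarrow> set_integrable M \<Omega> (\<lambda>x. \<mu> x * (f k x * f l x))"
  shows "(\<Sum>k\<in>I. \<Sum>l\<in>I. v k * (LINT x:\<Omega>|M. \<mu> x * (f k x * f l x)) * v l)
       = (LINT x:\<Omega>|M. \<mu> x * (\<Sum>k\<in>I. v k * f k x)\<^sup>2)"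
proof -
  define G where "G k l x = indicator \<Omega> x * (v k * (\<mu> x * (f k x * f l x)) * v l)" for k l x
  have G_eq: "G k l = (\<lambda>x. v k * v l * (indicator \<Omega> x * (\<mu> x * (f k x * f l x))))" for k l
    unfolding G_def by (simp add: fun_eq_iff mult_ac)
  have int: "integrable M (G k l)" if "k \<in> I" "l \<in> I" for k l
    using assms(2)[OF that] unfolding G_eq set_integrable_def by simp
  have "(\<Sum>k\<in>I. \<Sum>l\<in>I. v k * (LINT x:\<Omega>|M. \<mu> x * (f k x * f l x)) * v l)
      = (\<Sum>k\<in>I. \<Sum>l\<in>I. integral\<^sup>L M (G k l))"
    unfolding G_eq set_lebesgue_integral_def integral_mult_right_zero by (simp add: mult_ac)
  also have "\<dots> = (\<Sum>k\<in>I. integral\<^sup>L M (\<lambda>x. \<Sum>l\<in>I. G k l x))"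
    using int by (simp add: integral_sum)
  also have "\<dots> = integral\<^sup>L M (\<lambda>x. \<Sum>k\<in>I. \<Sum>l\<in>I. G k l x)"
    using int by (simp add: integral_sum integrable_sum)
  also have "\<dots> = (LINT x:\<Omega>|M. \<mu> x * (\<Sum>k\<in>I. v k * f k x)\<^sup>2)"
    unfolding G_def set_lebesgue_integral_def
    by (simp add: power2_eq_square sum_product sum_distrib_left mult_ac)
  finally show ?thesis .
qed

lemma pos_def_on_gram:
  fixes f :: "'i \<Rightarrow> 'a \<Rightarrow> real"
  assumes "finite I" "\<Omega> \<in> sets M" "emeasure M \<Omega> < \<infinity>"
    and "set_borel_measurable M \<Omega> \<mu>" "\<forall>x\<in>\<Omega>. \<bar>\<mu> x\<bar> \<le> B"
    and "AE x in M. x \<in> \<Omega> \<longrightarrow> \<mu> x > 0"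
    and "\<And>k. f k \<in> borel_measurable M" "\<And>k x. x \<in> \<Omega> \<Longrightarrow> \<bar>f k x\<bar> \<le> K"
    and independent: "\<And>v. AE x in M. x \<in> \<Omega> \<longrightarrow> (\<Sum>k\<in>I. v k * f k x) = 0 \<Longrightarrow> \<forall>k\<in>I. v k = 0"
  shows "pos_def_on I (\<lambda>k l. LINT x:\<Omega>|M. \<mu> x * (f k x * f l x))"
  unfolding pos_def_on_def
proof (intro allI impI)
  fix v :: "'i \<Rightarrow> real" assume "\<exists>k\<in>I. v k \<noteq> 0"
  define F where "F x = (\<Sum>k\<in>I. v k * f k x)" for x
  have "\<bar>f k x * f l x\<bar> \<le> K * K" if "x \<in> \<Omega>" for k l x
    unfolding abs_mult using assms(8)[OF that] by (meson abs_ge_zero mult_mono order_trans)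
  then have "set_integrable M \<Omega> (\<lambda>x. \<mu> x * (f k x * f l x))" for k l
    using assms(2-5,7) by (intro set_integrable_bounded_mult) auto
  then have Q: "(\<Sum>k\<in>I. \<Sum>l\<in>I. v k * (LINT x:\<Omega>|M. \<mu> x * (f k x * f l x)) * v l)
      = (LINT x:\<Omega>|M. \<mu> x * (F x)\<^sup>2)"
    unfolding F_def by (rule gram_quadratic_form[OF assms(1)])
  have "\<bar>F x\<bar> \<le> (\<Sum>k\<in>I. \<bar>v k\<bar> * K)" if "x \<in> \<Omega>" for x
    unfolding F_def using assms(8)[OF that]
    by (intro order_trans[OF sum_abs] sum_mono) (simp add: abs_mult mult_left_mono)
  then have "\<bar>(F x)\<^sup>2\<bar> \<le> (\<Sum>k\<in>I. \<bar>v k\<bar> * K)\<^sup>2" if "x \<in> \<Omega>" for x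
    using that power_mono[of "\<bar>F x\<bar>" _ 2] by simp
  then have "set_integrable M \<Omega> (\<lambda>x. \<mu> x * (F x)\<^sup>2)"
    unfolding F_def using assms(2-5,7) by (intro set_integrable_bounded_mult) auto
  then have int: "integrable M (\<lambda>x. indicator \<Omega> x * (\<mu> x * (F x)\<^sup>2))"
    by (simp add: set_integrable_def)
  have nonneg: "AE x in M. 0 \<le> indicator \<Omega> x * (\<mu> x * (F x)\<^sup>2)"
    using assms(6) by eventually_elim (auto simp: indicator_def)
  have "(LINT x:\<Omega>|M. \<mu> x * (F x)\<^sup>2) \<noteq> 0"
  proof
    assume "(LINT x:\<Omega>|M. \<mu> x * (F x)\<^sup>2) = 0"
    then have "AE x in M. indicator \<Omega> x * (\<mu> x * (F x)\<^sup>2) = 0"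
      using integral_nonneg_eq_0_iff_AE[OF int nonneg] by (simp add: set_lebesgue_integral_def)
    then have "AE x in M. x \<in> \<Omega> \<longrightarrow> F x = 0"
      using assms(6) by eventually_elim (auto simp: indicator_def)
    with independent \<open>\<exists>k\<in>I. v k \<noteq> 0\<close> show False unfolding F_def by blast
  qed
  moreover have "(LINT x:\<Omega>|M. \<mu> x * (F x)\<^sup>2) \<ge> 0"
    unfolding set_lebesgue_integral_def using integral_nonneg_AE[OF nonneg] by simp
  ultimately show "(\<Sum>k\<in>I. \<Sum>l\<in>I. v k * (LINT x:\<Omega>|M. \<mu> x * (f k x * f l x)) * v l) > 0"
    unfolding Q by linarith
qed

lemma kron_diag_mat_id_mat: "kron (diag_mat c) id_mat k m = (if k = m then c (fst k) else 0)"
  by (simp add: kron_def diag_mat_def id_mat_def prod_eq_iff)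

lemma scaled_mat_entry:
  assumes "finite I" "k \<in> I" "l \<in> I"
  shows "mat_mult I (mat_mult I (kron (diag_mat c) id_mat) M) (kron (diag_mat c) id_mat) k l
       = c (fst k) * M k l * c (fst l)"
proof -
  let ?D = "kron (diag_mat c) id_mat"
  have left: "mat_mult I ?D M k m = c (fst k) * M k m" for m
  proof -
    have "mat_mult I ?D M k m = (\<Sum>m'\<in>I. if k = m' then c (fst k) * M m' m else 0)"
      unfolding mat_mult_def by (intro sum.cong) (auto simp: kron_diag_mat_id_mat)
    then show ?thesis using assms(1,2) by simp
  qed
  have "mat_mult I (mat_mult I ?D M) ?D k l
      = (\<Sum>m\<in>I. if m = l then c (fst k) * M k m * c (fst m) else 0)"
    unfolding mat_mult_def[of I "mat_mult I ?D M"] left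
    by (intro sum.cong) (auto simp: kron_diag_mat_id_mat)
  then show ?thesis using assms(1,3) by simp
qed

lemma finite_idx: "finite (idx n :: (nat \<times> 'd::finite option) set)"
  by (simp add: idx_def)

lemma pos_def_on_scaled_iff:
  fixes M :: "nat \<times> 'd::finite option \<Rightarrow> nat \<times> 'd option \<Rightarrow> real"
  assumes "pos_def_on (idx n) M"
  shows "pos_def_on (idx n)
           (mat_mult (idx n) (mat_mult (idx n) (kron (diag_mat c) id_mat) M) (kron (diag_mat c) id_mat))
     \<longleftrightarrow> (\<forall>i<n. c i \<noteq> 0)"
    (is "pos_def_on _ ?S \<longleftrightarrow> _")
proof -
  have quad: "(\<Sum>k\<in>idx n. \<Sum>l\<in>idx n. v k * ?S k l * v l)
      = (\<Sum>k\<in>idx n. \<Sum>l\<in>idx n. (c (fst k) * v k) * M k l * (c (fst l) * v l))" for v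
    by (intro sum.cong refl) (simp add: scaled_mat_entry finite_idx mult_ac)
  show ?thesis
  proof
    assume pos: "pos_def_on (idx n) ?S"
    show "\<forall>i<n. c i \<noteq> 0"
    proof (intro allI impI notI)
      fix i assume "i < n" "c i = 0"
      define v where "v k = (if k = (i, None) then 1 else 0 :: real)" for k :: "nat \<times> 'd option"
      have "(i, None) \<in> idx n" "v (i, None) \<noteq> 0" using \<open>i < n\<close> by (simp_all add: idx_def v_def)
      then have "(\<Sum>k\<in>idx n. \<Sum>l\<in>idx n. v k * ?S k l * v l) > 0"
        using pos[unfolded pos_def_on_def, rule_format, of v] by blast
      moreover have "c (fst k) * v k = 0" for k using \<open>c i = 0\<close> by (simp add: v_def)
      ultimately show False unfolding quad by simp
    qed
  next
    assume c: "\<forall>i<n. c i \<noteq> 0"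
    show "pos_def_on (idx n) ?S"
      unfolding pos_def_on_def quad
    proof (intro allI impI)
      fix v :: "nat \<times> 'd option \<Rightarrow> real" assume "\<exists>k\<in>idx n. v k \<noteq> 0"
      then have "\<exists>k\<in>idx n. c (fst k) * v k \<noteq> 0" using c by (auto simp: idx_def)
      then show "(\<Sum>k\<in>idx n. \<Sum>l\<in>idx n. (c (fst k) * v k) * M k l * (c (fst l) * v l)) > 0"
        using assms[unfolded pos_def_on_def, rule_format, of "\<lambda>k. c (fst k) * v k"] by blast
    qed
  qed
qed

lemma continuous_on_act: "continuous_on UNIV (act r :: real^'d \<Rightarrow> real)"
  unfolding act_def by (intro continuous_intros)

lemma act_add_scaleR: "act r (p + t *\<^sub>R u) = act r p + t * (snd r \<bullet> u)"
  by (simp add: act_def algebra_simps inner_add_right)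

lemma hyperplane_act: "hyperplane \<Omega> r = {x \<in> \<Omega>. act r x = 0}"
  unfolding hyperplane_def act_def by (simp add: add.commute)

lemma inner_annihilator_imp_parallel:
  fixes a b :: "'a::real_inner"
  assumes "a \<noteq> 0" and "\<And>u. a \<bullet> u = 0 \<Longrightarrow> b \<bullet> u = 0"
  shows "b = ((b \<bullet> a) / (a \<bullet> a)) *\<^sub>R a"
proof -
  define u where "u = b - ((b \<bullet> a) / (a \<bullet> a)) *\<^sub>R a"
  have au: "a \<bullet> u = 0"
    using assms(1) by (simp add: u_def inner_diff_right inner_commute)
  moreover have "b \<bullet> u = 0" using assms(2)[OF au] .
  ultimately have "u \<bullet> u = 0" by (simp add: u_def inner_diff_left)
  then show ?thesis by (simp add: u_def)
qed

lemma act_proportional: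
  fixes r s :: "real \<times> (real^'d)"
  assumes "open U" "p \<in> U" "act r p = 0" "snd s \<noteq> 0"
    and vanish: "\<And>x. x \<in> U \<Longrightarrow> act r x = 0 \<Longrightarrow> act s x = 0"
  shows "\<exists>l. l \<noteq> 0 \<and> (\<forall>x. act s x = l * act r x)"
proof -
  obtain e where e: "e > 0" "ball p e \<subseteq> U" using assms(1,2) open_contains_ball by blast
  have "act s p = 0" using vanish assms(2,3) by blast
  have orth: "snd s \<bullet> u = 0" if "snd r \<bullet> u = 0" for u
  proof (cases "u = 0")
    case False
    define t where "t = e / (2 * norm u)"
    have "t > 0" using e False by (simp add: t_def)
    have "norm (t *\<^sub>R u) < e" using e False by (simp add: t_def)
    then have "p + t *\<^sub>R u \<in> U" using e by (auto simp: dist_norm)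
    moreover have "act r (p + t *\<^sub>R u) = 0" using assms(3) that by (simp add: act_add_scaleR)
    ultimately have "act s (p + t *\<^sub>R u) = 0" by (rule vanish)
    then show ?thesis using \<open>act s p = 0\<close> \<open>t > 0\<close> by (simp add: act_add_scaleR)
  qed simp
  have "snd r \<noteq> 0"
    using orth[of "snd s"] assms(4) by auto
  then obtain l where l: "snd s = l *\<^sub>R snd r"
    using inner_annihilator_imp_parallel orth by blast
  then have "l \<noteq> 0" using assms(4) by auto
  moreover have "fst s = l * fst r"
  proof -
    have "snd r \<bullet> p = - fst r" using assms(3) by (simp add: act_def)
    then show ?thesis using \<open>act s p = 0\<close> l by (simp add: act_def)
  qed
  ultimately show ?thesis using l by (auto simp: act_def algebra_simps)
qed

lemma hyperplane_locally_distinct: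
  fixes r s :: "real \<times> (real^'d)"
  assumes "open U" "U \<subseteq> \<Omega>" "q \<in> U" "act r q = 0" "snd s \<noteq> 0"
    and "hyperplane \<Omega> s \<noteq> hyperplane \<Omega> r"
  shows "\<exists>x\<in>U. act r x = 0 \<and> act s x \<noteq> 0"
proof (rule ccontr)
  assume "\<not> ?thesis"
  then obtain l where "l \<noteq> 0" "\<And>x. act s x = l * act r x"
    using act_proportional[OF assms(1,3,4,5)] by blast
  then have "hyperplane \<Omega> s = hyperplane \<Omega> r" by (simp add: hyperplane_act)
  with assms(6) show False ..
qed

text \<open>Moving from a point of the hyperplane of \<open>r\<close> towards a point of it off the
  hyperplane of \<open>s k\<close>, one leaves the hyperplane of \<open>s k\<close> while staying off
  the finitely many others.\<close>

lemma hyperplane_point_off_others: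
  fixes r :: "real \<times> (real^'d)" and s :: "'j \<Rightarrow> real \<times> (real^'d)"
  assumes "open \<Omega>" "p0 \<in> \<Omega>" "act r p0 = 0" "finite S"
    and "\<And>j. j \<in> S \<Longrightarrow> snd (s j) \<noteq> 0 \<and> hyperplane \<Omega> (s j) \<noteq> hyperplane \<Omega> r"
  shows "\<exists>p\<in>\<Omega>. act r p = 0 \<and> (\<forall>j\<in>S. act (s j) p \<noteq> 0)"
  using assms(4,5)
proof (induction S rule: finite_induct)
  case empty
  then show ?case using assms(2,3) by blast
next
  case (insert k S)
  then obtain p where p: "p \<in> \<Omega>" "act r p = 0" "\<forall>j\<in>S. act (s j) p \<noteq> 0" by blast
  show ?case
  proof (cases "act (s k) p = 0")
    case True
    obtain e where e: "e > 0" "ball p e \<subseteq> \<Omega>" using assms(1) p(1) open_contains_ball by blast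
    obtain y where y: "y \<in> ball p e" "act r y = 0" "act (s k) y \<noteq> 0"
      using hyperplane_locally_distinct[of "ball p e" \<Omega> p r "s k"] e p(2) insert.prems by auto
    define z where "z t = p + t *\<^sub>R (y - p)" for t
    have act_z: "act q (z t) = act q p + t * (act q y - act q p)" for q t
      unfolding z_def act_add_scaleR by (simp add: act_def inner_diff_right)
    have "\<forall>\<^sub>F t in at_right 0. \<forall>j\<in>S. act (s j) (z t) \<noteq> 0"
    proof (rule eventually_ball_finite[OF insert.hyps(1)], rule ballI)
      fix j assume "j \<in> S"
      have "((\<lambda>t. act (s j) (z t)) \<longlongrightarrow> act (s j) p) (at_right 0)"
        unfolding act_z by (auto intro!: tendsto_eq_intros)
      then show "\<forall>\<^sub>F t in at_right 0. act (s j) (z t) \<noteq> 0"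
        using p(3) \<open>j \<in> S\<close> by (intro tendsto_imp_eventually_ne) auto
    qed
    moreover have "\<forall>\<^sub>F t in at_right (0::real). t \<in> {0<..<1}"
      by (rule eventually_at_right_real) simp
    ultimately obtain t where t: "t \<in> {0<..<1}" "\<forall>j\<in>S. act (s j) (z t) \<noteq> 0"
      using eventually_happens[OF eventually_conj] trivial_limit_at_right_real by blast
    have "dist p (z t) = t * dist p y" using t(1) by (simp add: z_def dist_norm norm_minus_commute)
    also have "\<dots> \<le> dist p y" using t(1) by (intro mult_left_le_one_le) auto
    also have "\<dots> < e" using y(1) by simp
    finally have "z t \<in> \<Omega>" using e by auto
    moreover have "act r (z t) = 0" "act (s k) (z t) \<noteq> 0"
      using p(2) y(2,3) True t(1) by (simp_all add: act_z)
    ultimately show ?thesis using t(2) by blast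
  qed (use p in blast)
qed

text \<open>\<open>aug_comb w x\<close> is the paper's \<open>w \<cdot> y\<close>, an affine function of \<open>x\<close>.\<close>

definition aug_comb :: "('d option \<Rightarrow> real) \<Rightarrow> real^'d \<Rightarrow> real" where
  "aug_comb w x = (\<Sum>a\<in>UNIV. w a * aug x a)"

lemma aug_comb_eq: "aug_comb w x = w None + (\<Sum>k\<in>UNIV. w (Some k) * x $ k)"
proof -
  have "aug_comb w x = (\<Sum>a\<in>insert None (range Some). w a * aug x a)"
    unfolding aug_comb_def by (simp add: UNIV_option_conv)
  also have "\<dots> = w None + (\<Sum>k\<in>UNIV. w (Some k) * x $ k)"
    by (simp add: sum.reindex aug_def)
  finally show ?thesis .
qed

lemma continuous_on_aug_comb: "continuous_on UNIV (aug_comb w)"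
  unfolding aug_comb_eq by (intro continuous_intros)

lemma aug_comb_sum: "aug_comb (\<lambda>a. \<Sum>j\<in>S. c j * w j a) x = (\<Sum>j\<in>S. c j * aug_comb (w j) x)"
  unfolding aug_comb_def
  by (simp add: sum_distrib_left sum_distrib_right sum.swap[of _ S] mult.assoc)

lemma aug_comb_eq_0_on_open:
  assumes "open U" "q \<in> U" "\<forall>x\<in>U. aug_comb w x = 0"
  shows "w a = 0"
proof -
  obtain e where e: "e > 0" "ball q e \<subseteq> U" using assms(1,2) open_contains_ball by blast
  have slope: "w (Some k) = 0" for k
  proof -
    have "q + (e/2) *\<^sub>R axis k 1 \<in> U" using e by (auto simp: dist_norm norm_axis_1)
    then have "aug_comb w (q + (e/2) *\<^sub>R axis k 1) - aug_comb w q = 0" using assms(2,3) by simp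
    moreover have "aug_comb w (q + (e/2) *\<^sub>R axis k 1) - aug_comb w q
        = e/2 * (\<Sum>j\<in>UNIV. w (Some j) * axis k 1 $ j)"
      by (simp add: aug_comb_eq algebra_simps sum.distrib sum_distrib_left)
    moreover have "(\<Sum>j\<in>UNIV. w (Some j) * axis k 1 $ j) = w (Some k)"
      by (simp add: axis_def if_distrib cong: if_cong)
    ultimately show ?thesis using e(1) by simp
  qed
  have "w None = 0" using assms(3)[rule_format, OF assms(2)] by (simp add: aug_comb_eq slope)
  with slope show ?thesis by (cases a) auto
qed

lemma aug_comb_AE_0_on_open:
  assumes "open U" "q \<in> U" "AE x in lebesgue. x \<in> U \<longrightarrow> aug_comb w x = 0"
  shows "w a = 0"
proof (rule aug_comb_eq_0_on_open[OF assms(1,2)], intro ballI)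
  fix x assume "x \<in> U"
  have "closed {x. aug_comb w x = 0}"
    using continuous_on_aug_comb by (intro closed_Collect_eq) (auto intro: continuous_on_const)
  with assms(1,3) \<open>x \<in> U\<close> show "aug_comb w x = 0"
    using mem_closed_if_AE_lebesgue_open[of U "{x. aug_comb w x = 0}"] by auto
qed

text \<open>Across a hyperplane the Heaviside factor switches an affine term on: the part
  below the hyperplane forces \<open>g = 0\<close>, and then the part above forces \<open>h = 0\<close>.\<close>

lemma heaviside_jump_affine:
  assumes "open U" "p \<in> U" "act r p = 0" "snd r \<noteq> 0"
    and "AE x in lebesgue. x \<in> U \<longrightarrow> aug_comb g x + heaviside (act r x) * aug_comb h x = 0"
  shows "h a = 0"
proof -
  obtain e where e: "e > 0" "ball p e \<subseteq> U" using assms(1,2) open_contains_ball by blast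
  define t where "t = e / (2 * norm (snd r))"
  have "t > 0" using e assms(4) by (simp add: t_def)
  have in_U: "p + s *\<^sub>R snd r \<in> U" if "\<bar>s\<bar> = t" for s
    using that e assms(4) by (auto simp: t_def dist_norm)
  have act_side: "act r (p + s *\<^sub>R snd r) = s * (snd r \<bullet> snd r)" for s
    using assms(3) by (simp add: act_add_scaleR)
  define U_neg where "U_neg = U \<inter> {x. act r x < 0}"
  define U_pos where "U_pos = U \<inter> {x. 0 < act r x}"
  have "open U_neg" "open U_pos"
    unfolding U_neg_def U_pos_def using assms(1)
    by (auto intro!: open_Int open_Collect_less continuous_on_act continuous_intros)
  have "p + (- t) *\<^sub>R snd r \<in> U_neg" "p + t *\<^sub>R snd r \<in> U_pos"
    unfolding U_neg_def U_pos_def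
    using in_U[of t] in_U[of "- t"] act_side[of t] act_side[of "- t"] \<open>t > 0\<close> assms(4)
    by (auto simp: mult_pos_pos mult_neg_pos)
  have "AE x in lebesgue. x \<in> U_neg \<longrightarrow> aug_comb g x = 0"
    using assms(5) by eventually_elim (auto simp: U_neg_def heaviside_def)
  then have g0: "g b = 0" for b
    by (rule aug_comb_AE_0_on_open[OF \<open>open U_neg\<close> \<open>p + (- t) *\<^sub>R snd r \<in> U_neg\<close>])
  have "AE x in lebesgue. x \<in> U_pos \<longrightarrow> aug_comb h x = 0"
    using assms(5) by eventually_elim (auto simp: U_pos_def heaviside_def aug_comb_def g0)
  then show ?thesis
    by (rule aug_comb_AE_0_on_open[OF \<open>open U_pos\<close> \<open>p + t *\<^sub>R snd r \<in> U_pos\<close>])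
qed

lemma Upsilon_normal_nonzero: "r \<in> Upsilon \<Omega> n \<Longrightarrow> j < n \<Longrightarrow> snd (r j) \<noteq> 0"
  unfolding Upsilon_def by auto

text \<open>Near a point of the \<open>i\<close>-th hyperplane lying off all the others, every other
  Heaviside factor is constant, so the combination reduces to an affine term plus one jump.\<close>

lemma heaviside_affine_independent:
  fixes r :: "nat \<Rightarrow> real \<times> (real^'d)"
  assumes "open \<Omega>" and r: "r \<in> Upsilon \<Omega> n"
    and distinct: "\<forall>i<n. \<forall>j<n. i \<noteq> j \<longrightarrow> hyperplane \<Omega> (r i) \<noteq> hyperplane \<Omega> (r j)"
    and zero: "AE x in lebesgue. x \<in> \<Omega> \<longrightarrow>
                 (\<Sum>j<n. heaviside (act (r j) x) * aug_comb (\<lambda>a. v (j, a)) x) = 0"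
    and "i < n"
  shows "v (i, a) = 0"
proof -
  define S where "S = {..<n} - {i}"
  obtain p0 where "p0 \<in> \<Omega>" "act (r i) p0 = 0"
    using r \<open>i < n\<close> unfolding Upsilon_def hyperplane_act by auto
  moreover have "snd (r j) \<noteq> 0 \<and> hyperplane \<Omega> (r j) \<noteq> hyperplane \<Omega> (r i)" if "j \<in> S" for j
    using that distinct \<open>i < n\<close> Upsilon_normal_nonzero[OF r] by (auto simp: S_def)
  ultimately obtain p where p: "p \<in> \<Omega>" "act (r i) p = 0" "\<forall>j\<in>S. act (r j) p \<noteq> 0"
    using hyperplane_point_off_others[OF assms(1), of p0 "r i" S r] by (auto simp: S_def)
  define U where "U = \<Omega> \<inter> (\<Inter>j\<in>S. {x. 0 < act (r j) x * act (r j) p})"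
  have "open U"
    unfolding U_def using assms(1)
    by (auto simp: S_def intro!: open_Int open_INT open_Collect_less continuous_on_act continuous_intros)
  have "p \<in> U" using p by (auto simp: U_def zero_less_mult_iff)
  have other: "heaviside (act (r j) x) = heaviside (act (r j) p)" if "x \<in> U" "j \<in> S" for x j
    using that by (auto simp: U_def heaviside_def zero_less_mult_iff)
  define C where "C a = (\<Sum>j\<in>S. heaviside (act (r j) p) * v (j, a))" for a
  have split: "(\<Sum>j<n. heaviside (act (r j) x) * aug_comb (\<lambda>a. v (j, a)) x)
      = aug_comb C x + heaviside (act (r i) x) * aug_comb (\<lambda>a. v (i, a)) x" if "x \<in> U" for x
  proof -
    have "(\<Sum>j<n. heaviside (act (r j) x) * aug_comb (\<lambda>a. v (j, a)) x)
        = heaviside (act (r i) x) * aug_comb (\<lambda>a. v (i, a)) x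
          + (\<Sum>j\<in>S. heaviside (act (r j) x) * aug_comb (\<lambda>a. v (j, a)) x)"
      unfolding S_def using \<open>i < n\<close> by (simp add: sum.remove)
    also have "(\<Sum>j\<in>S. heaviside (act (r j) x) * aug_comb (\<lambda>a. v (j, a)) x) = aug_comb C x"
      unfolding C_def aug_comb_sum using other[OF that] by simp
    finally show ?thesis by simp
  qed
  have "AE x in lebesgue. x \<in> U \<longrightarrow>
      aug_comb C x + heaviside (act (r i) x) * aug_comb (\<lambda>a. v (i, a)) x = 0"
    using zero by eventually_elim (auto simp: split U_def)
  from heaviside_jump_affine[OF \<open>open U\<close> \<open>p \<in> U\<close> p(2) Upsilon_normal_nonzero[OF r \<open>i < n\<close>] this]
  show ?thesis .
qed

definition layer_feature ::
    "(nat \<Rightarrow> real \<times> (real^'d)) \<Rightarrow> nat \<times> 'd option \<Rightarrow> real^'d \<Rightarrow> real" where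
  "layer_feature r k x = heaviside (act (r (fst k)) x) * aug x (snd k)"

lemma layer_GN_eq_gram:
  "layer_GN \<Omega> \<mu> n r k l = (LINT x:\<Omega>|lebesgue. \<mu> x * (layer_feature r k x * layer_feature r l x))"
  unfolding layer_GN_def kron_def layer_feature_def by (simp add: mult_ac)

lemma symmetric_on_layer_GN: "symmetric_on I (layer_GN \<Omega> \<mu> n r)"
  unfolding symmetric_on_def layer_GN_eq_gram by (simp add: mult.commute)

lemma sum_layer_feature:
  "(\<Sum>k\<in>idx n. v k * layer_feature r k x)
     = (\<Sum>j<n. heaviside (act (r j) x) * aug_comb (\<lambda>a. v (j, a)) x)"
  unfolding idx_def sum.cartesian_product' layer_feature_def aug_comb_def
  by (simp add: sum_distrib_left mult_ac)

lemma continuous_on_aug: "continuous_on UNIV (\<lambda>x. aug x a)"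
  by (cases a) (auto simp: aug_def intro!: continuous_intros)

lemma borel_measurable_layer_feature: "layer_feature r k \<in> borel_measurable lebesgue"
proof -
  have continuous_measurable: "f \<in> borel_measurable lebesgue"
    if "continuous_on UNIV f" for f :: "real^'d \<Rightarrow> real"
    by (rule measurable_completion) (simp add: borel_measurable_continuous_onI[OF that])
  have "heaviside \<in> borel_measurable borel"
    unfolding heaviside_def by measurable
  with continuous_measurable[OF continuous_on_act]
  have "(\<lambda>x. heaviside (act (r (fst k)) x)) \<in> borel_measurable lebesgue"
    by (rule measurable_compose)
  with continuous_measurable[OF continuous_on_aug] show ?thesis
    unfolding layer_feature_def[abs_def] by (intro borel_measurable_times)
qed

lemma abs_layer_feature_le: "\<bar>layer_feature r k x\<bar> \<le> 1 + norm x"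
proof -
  have "\<bar>x $ j\<bar> \<le> 1 + norm x" for j using component_le_norm_cart[of x j] by linarith
  then have "\<bar>aug x (snd k)\<bar> \<le> 1 + norm x" by (auto simp: aug_def split: option.split)
  then show ?thesis by (simp add: layer_feature_def heaviside_def)
qed

lemma pos_def_on_layer_GN:
  fixes \<Omega> :: "(real^'d) set" and \<mu> :: "real^'d \<Rightarrow> real"
  assumes "open \<Omega>" "bounded \<Omega>" "set_borel_measurable lebesgue \<Omega> \<mu>" "\<forall>x\<in>\<Omega>. \<bar>\<mu> x\<bar> \<le> B"
    and "AE x in lebesgue. x \<in> \<Omega> \<longrightarrow> \<mu> x > 0"
    and "r \<in> Upsilon \<Omega> n"
    and "\<forall>i<n. \<forall>j<n. i \<noteq> j \<longrightarrow> hyperplane \<Omega> (r i) \<noteq> hyperplane \<Omega> (r j)"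
  shows "pos_def_on (idx n) (layer_GN \<Omega> \<mu> n r)"
proof -
  obtain R where R: "\<forall>x\<in>\<Omega>. norm x \<le> R" using assms(2) bounded_iff by blast
  have "\<Omega> \<in> lmeasurable" using assms(1,2) by (rule lmeasurable_open[rotated])
  have "pos_def_on (idx n) (\<lambda>k l. LINT x:\<Omega>|lebesgue. \<mu> x * (layer_feature r k x * layer_feature r l x))"
  proof (rule pos_def_on_gram[OF finite_idx _ _ assms(3,4,5) borel_measurable_layer_feature])
    show "\<Omega> \<in> sets lebesgue" "emeasure lebesgue \<Omega> < \<infinity>"
      using \<open>\<Omega> \<in> lmeasurable\<close> by (auto simp: fmeasurable_def)
    show "\<bar>layer_feature r k x\<bar> \<le> 1 + R" if "x \<in> \<Omega>" for k x
      using abs_layer_feature_le[of r k x] R that by fastforce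
    fix v :: "nat \<times> 'd option \<Rightarrow> real"
    assume "AE x in lebesgue. x \<in> \<Omega> \<longrightarrow> (\<Sum>k\<in>idx n. v k * layer_feature r k x) = 0"
    then have "AE x in lebesgue. x \<in> \<Omega> \<longrightarrow>
        (\<Sum>j<n. heaviside (act (r j) x) * aug_comb (\<lambda>a. v (j, a)) x) = 0"
      by (simp add: sum_layer_feature)
    then show "\<forall>k\<in>idx n. v k = 0"
      using heaviside_affine_independent[OF assms(1,6,7)] by (auto simp: idx_def)
  qed
  then show ?thesis by (simp add: layer_GN_eq_gram[abs_def])
qed

theorem theorem4p3:
  fixes \<Omega> :: "(real^'d) set" and \<mu> :: "real^'d \<Rightarrow> real"
    and n :: nat and r :: "nat \<Rightarrow> real \<times> (real^'d)"
  assumes "open \<Omega>" and "connected \<Omega>" and "bounded \<Omega>"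
    and "set_borel_measurable lebesgue \<Omega> \<mu>"
    and "\<exists>B. \<forall>x\<in>\<Omega>. \<bar>\<mu> x\<bar> \<le> B"
    and "AE x in lebesgue. x \<in> \<Omega> \<longrightarrow> \<mu> x > 0"
    and "r \<in> Upsilon \<Omega> n"
    and "\<forall>i<n. \<forall>j<n. i \<noteq> j \<longrightarrow> hyperplane \<Omega> (r i) \<noteq> hyperplane \<Omega> (r j)"
  shows "symmetric_on (idx n) (layer_GN \<Omega> \<mu> n r)
       \<and> pos_def_on (idx n) (layer_GN \<Omega> \<mu> n r)
       \<and> (\<forall>c :: nat \<Rightarrow> real. pos_def_on (idx n) (GN \<Omega> \<mu> n c r) \<longleftrightarrow> (\<forall>i<n. c i \<noteq> 0))"
proof -
  obtain B where "\<forall>x\<in>\<Omega>. \<bar>\<mu> x\<bar> \<le> B" using assms(5) by blast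
  then have "pos_def_on (idx n) (layer_GN \<Omega> \<mu> n r)"
    using pos_def_on_layer_GN assms(1,3,4,6,7,8) by blast
  then show ?thesis
    unfolding GN_def by (simp add: symmetric_on_layer_GN pos_def_on_scaled_iff)
qed

end
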